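(* Let $A_1=\begin{pmatrix}1&1&2\\1&0&1\\2&1&0\end{pmatrix}$, $a=\begin{pmatrix}2\\2\\1\end{pmatrix}$, let $k\ge1$, let $v\in\mathbb R^k$ be entrywise nonnegative with $v^Tv=1$, and define $$A(v)=\begin{pmatrix}A_1&av^T\\ va^T& vv^T\end{pmatrix}\in\mathbb R^{(k+3)\times(k+3)}.$$ Then $\operatorname{rk}(A(v))=\operatorname{rk}_+(A(v))=3$ and $\operatorname{st}_+(A(v))=4$.
   Context: The SNT-rank $\operatorname{st}_+(A)$ of a symmetric entrywise nonnegative $n\times n$ matrix $A$ is the minimal $k$ such that $A=BCB^T$ with $B$ an entrywise nonnegative $n\times k$ matrix and $C$ a symmetric entrywise nonnegative $k\times k$ matrix. $\operatorname{rk}_+(A)$ is the minimal $k$ such that $A=UV^T$ with $U,V$ entrywise nonnegative $n\times k$ matrices. *)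

theory Defs
  imports "Jordan_Normal_Form.DL_Rank"
begin

definition nonneg_mat :: "real mat \<Rightarrow> bool" where
  "nonneg_mat M \<longleftrightarrow> (\<forall>i<dim_row M. \<forall>j<dim_col M. M $$ (i,j) \<ge> 0)"

definition mat_rank :: "real mat \<Rightarrow> nat" where
  "mat_rank M = vec_space.rank (dim_row M) M"

definition nonneg_rank :: "real mat \<Rightarrow> nat" where
  "nonneg_rank A = (LEAST k. \<exists>U V. U \<in> carrier_mat (dim_row A) k \<and> V \<in> carrier_mat (dim_row A) k
      \<and> nonneg_mat U \<and> nonneg_mat V \<and> A = U * transpose_mat V)"

definition snt_rank :: "real mat \<Rightarrow> nat" where
  "snt_rank A = (LEAST k. \<exists>B C. B \<in> carrier_mat (dim_row A) k \<and> C \<in> carrier_mat k k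
      \<and> transpose_mat C = C \<and> nonneg_mat B \<and> nonneg_mat C \<and> A = B * C * transpose_mat B)"

definition outer :: "real vec \<Rightarrow> real vec \<Rightarrow> real mat" where
  "outer x y = mat (dim_vec x) (dim_vec y) (\<lambda>(i,j). x $ i * y $ j)"

definition A1 :: "real mat" where
  "A1 = mat_of_rows_list 3 [[1,1,2],[1,0,1],[2,1,0]]"

definition avec :: "real vec" where
  "avec = vec_of_list [2,2,1]"

definition Av :: "real vec \<Rightarrow> real mat" where
  "Av v = four_block_mat A1 (outer avec v) (outer v avec) (outer v v)"

end

theory Submission
  imports Defs "Jordan_Normal_Form.DL_Rank_Submatrix"
begin

text \<open>
  Since \<open>a = A\<^sub>1 (1,-1,1)\<^sup>T\<close>, the matrix \<open>A(v)\<close> factors as \<open>B C B\<^sup>T\<close> with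
  \<open>B = diag(I\<^sub>3, v)\<close> and \<open>C = [A\<^sub>1 a; a\<^sup>T 1]\<close>, and also as a product of two nonnegative matrices
  with three columns; as \<open>A\<^sub>1\<close> is nonsingular, no factorization \<open>U V\<^sup>T\<close> has fewer than three columns.
  This gives \<open>rk = rk\<^sub>+ = 3\<close> and \<open>st\<^sub>+ \<le> 4\<close>.

  Suppose \<open>A(v) = B C B\<^sup>T\<close> with \<open>B \<ge> 0\<close> having three columns and \<open>C \<ge> 0\<close> symmetric. The leading
  block \<open>B\<^sub>1\<close> of \<open>B\<close> and \<open>C\<close> are nonsingular since \<open>A\<^sub>1 = B\<^sub>1 C B\<^sub>1\<^sup>T\<close>, so the identity \<open>a = A\<^sub>1 (1,-1,1)\<^sup>T\<close> forces
  every further row of \<open>B\<close> to be \<open>v\<^sub>t (b\<^sub>0 - b\<^sub>1 + b\<^sub>2)\<close>, where \<open>b\<^sub>0, b\<^sub>1, b\<^sub>2\<close> are the rows of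
  \<open>B\<^sub>1\<close>; hence \<open>b\<^sub>1 \<le> b\<^sub>0 + b\<^sub>2\<close>. The zero diagonal entries \<open>b\<^sub>1\<^sup>T C b\<^sub>1 = b\<^sub>2\<^sup>T C b\<^sub>2 = 0\<close>
  make \<open>C\<close> vanish on the supports of \<open>b\<^sub>1\<close> and of \<open>b\<^sub>2\<close>, and nonsingularity of \<open>C\<close> then pins
  \<open>b\<^sub>1, b\<^sub>2\<close> down to multiples of distinct unit vectors; the remaining Gram equations
  together with \<open>b\<^sub>1 \<le> b\<^sub>0 + b\<^sub>2\<close> are then infeasible.
\<close>

section \<open>Factorization width and rank\<close>

lemma sum_lessThan_3: "(\<Sum>l<(3::nat). f l) = f 0 + f 1 + (f 2 :: 'a::comm_monoid_add)"
  by (simp add: eval_nat_numeral)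

lemma sum_lessThan_4: "(\<Sum>l<(4::nat). f l) = f 0 + f 1 + f 2 + (f 3 :: 'a::comm_monoid_add)"
  by (simp add: eval_nat_numeral)

lemma less_3_cases: "(i::nat) < 3 \<longleftrightarrow> i = 0 \<or> i = 1 \<or> i = 2"
  by auto

lemma less_4_cases: "(i::nat) < 4 \<longleftrightarrow> i = 0 \<or> i = 1 \<or> i = 2 \<or> i = 3"
  by auto

lemma index_mult_transpose_mat:
  fixes U V :: "'a::comm_ring_1 mat"
  assumes "U \<in> carrier_mat n m" "V \<in> carrier_mat n' m" "i < n" "j < n'"
  shows "(U * transpose_mat V) $$ (i,j) = (\<Sum>l<m. U $$ (i,l) * V $$ (j,l))"
  using assms by (simp add: scalar_prod_def atLeast0LessThan)

lemma index_mult_mult_transpose_mat: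
  fixes B C :: "'a::comm_ring_1 mat"
  assumes B: "B \<in> carrier_mat n m" and C: "C \<in> carrier_mat m m" and "i < n" "j < n"
  shows "(B * C * transpose_mat B) $$ (i,j) = (\<Sum>p<m. \<Sum>q<m. B $$ (i,p) * C $$ (p,q) * B $$ (j,q))"
proof -
  have "(B * C * transpose_mat B) $$ (i,j) = (\<Sum>p<m. B $$ (i,p) * (\<Sum>q<m. C $$ (p,q) * B $$ (j,q)))"
    using assms by (simp add: scalar_prod_def atLeast0LessThan)
  also have "\<dots> = (\<Sum>p<m. \<Sum>q<m. B $$ (i,p) * C $$ (p,q) * B $$ (j,q))"
    by (simp add: sum_distrib_left mult.assoc)
  finally show ?thesis .
qed

lemma submatrix_lessThan:
  assumes "r \<le> dim_row A" "s \<le> dim_col A"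
  shows "submatrix A {..<r} {..<s} = mat r s (\<lambda>(i,j). A $$ (i,j))"
proof -
  have pick_lessThan: "pick {..<t} i = i" if "i < t" for t i :: nat
  proof -
    have "{a\<in>{..<t}. a < i} = {..<i}" using that by auto
    thus ?thesis using pick_card_in_set[of i "{..<t}"] that by simp
  qed
  have rows: "card {i. i < dim_row A \<and> i \<in> {..<r}} = r"
    and cols: "card {j. j < dim_col A \<and> j \<in> {..<s}} = s"
  proof -
    have "{i. i < dim_row A \<and> i \<in> {..<r}} = {..<r}" "{j. j < dim_col A \<and> j \<in> {..<s}} = {..<s}"
      using assms by auto
    thus "card {i. i < dim_row A \<and> i \<in> {..<r}} = r" "card {j. j < dim_col A \<and> j \<in> {..<s}} = s"
      by simp_all
  qed
  show ?thesis
  proof (rule eq_matI)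
    fix i j assume "i < dim_row (mat r s (\<lambda>(i,j). A $$ (i,j)))" "j < dim_col (mat r s (\<lambda>(i,j). A $$ (i,j)))"
    hence "i < r" "j < s" by simp_all
    thus "submatrix A {..<r} {..<s} $$ (i,j) = mat r s (\<lambda>(i,j). A $$ (i,j)) $$ (i,j)"
      using submatrix_index[of i A "{..<r}" j "{..<s}"] rows cols pick_lessThan by simp
  qed (unfold dim_submatrix rows cols, simp_all)
qed

lemma det_nonzero_kernel_trivial:
  fixes M :: "'a::field mat"
  assumes M: "M \<in> carrier_mat n n" and det: "det M \<noteq> 0"
    and kernel: "\<And>m. m < n \<Longrightarrow> (\<Sum>q<n. M $$ (m,q) * x q) = 0" and "q < n"
  shows "x q = 0"
proof -
  have "M *\<^sub>v vec n x = 0\<^sub>v n"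
    using M kernel by (intro eq_vecI) (auto simp: scalar_prod_def atLeast0LessThan)
  hence "vec n x = 0\<^sub>v n"
    using det_0_iff_vec_prod_zero_field[OF M] det vec_carrier[of n x] by blast
  thus ?thesis using \<open>q < n\<close> by (metis index_vec index_zero_vec(1))
qed

text \<open>Padding the factors with zero columns exhibits a singular factor of the leading block.\<close>

lemma factorization_width_ge_leading_block:
  fixes U V :: "'a::field mat"
  assumes U: "U \<in> carrier_mat n m" and V: "V \<in> carrier_mat n m" and "r \<le> n"
    and det: "det (mat r r (\<lambda>(i,j). (U * transpose_mat V) $$ (i,j))) \<noteq> 0"
  shows "r \<le> m"
proof (rule ccontr)
  assume "\<not> r \<le> m"
  hence m: "m < r" by simp
  define pad where "pad W = mat r r (\<lambda>(i,l). if l < m then W $$ (i,l) else 0)" for W :: "'a mat"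
  have pad_carrier: "pad W \<in> carrier_mat r r" for W
    unfolding pad_def by simp
  have "mat r r (\<lambda>(i,j). (U * transpose_mat V) $$ (i,j)) = pad U * transpose_mat (pad V)"
  proof (rule eq_matI)
    fix i j assume "i < dim_row (pad U * transpose_mat (pad V))" "j < dim_col (pad U * transpose_mat (pad V))"
    hence i: "i < r" and j: "j < r" by (simp_all add: pad_def)
    have "(pad U * transpose_mat (pad V)) $$ (i,j) = (\<Sum>l<r. pad U $$ (i,l) * pad V $$ (j,l))"
      using index_mult_transpose_mat[OF pad_carrier pad_carrier i j] .
    also have "\<dots> = (\<Sum>l<m. U $$ (i,l) * V $$ (j,l))"
      using m i j by (intro sum.mono_neutral_cong_right) (auto simp: pad_def)
    also have "\<dots> = (U * transpose_mat V) $$ (i,j)"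
      using index_mult_transpose_mat[OF U V] i j \<open>r \<le> n\<close> by simp
    finally show "mat r r (\<lambda>(i,j). (U * transpose_mat V) $$ (i,j)) $$ (i,j)
        = (pad U * transpose_mat (pad V)) $$ (i,j)"
      using i j by simp
  qed (auto simp: pad_def)
  moreover have "det (pad U) = 0"
  proof -
    have "pad U *\<^sub>v unit_vec r (r - 1) = 0\<^sub>v r"
      using m by (intro eq_vecI) (auto simp: pad_def)
    moreover have "unit_vec r (r - 1) \<noteq> (0\<^sub>v r :: 'a vec)"
    proof
      assume "unit_vec r (r - 1) = (0\<^sub>v r :: 'a vec)"
      hence "unit_vec r (r - 1) $ (r - 1) = (0\<^sub>v r :: 'a vec) $ (r - 1)" by simp
      thus False using m by simp
    qed
    ultimately show ?thesis
      using det_0_iff_vec_prod_zero_field[OF pad_carrier] unit_vec_carrier by blast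
  qed
  ultimately show False
    using det det_mult[OF pad_carrier, of "transpose_mat (pad V)"] pad_carrier[of V] by simp
qed

lemma rank_mult_transpose_le:
  fixes U V :: "'a::field mat"
  assumes U: "U \<in> carrier_mat n m" and V: "V \<in> carrier_mat n' m"
  shows "vec_space.rank n (U * transpose_mat V) \<le> m"
proof -
  define P where "P l = mat n n' (\<lambda>(i,j). \<Sum>k<l. U $$ (i,k) * V $$ (j,k))" for l
  have P_carrier: "P l \<in> carrier_mat n n'" for l
    unfolding P_def by simp
  have "vec_space.rank n (P l) \<le> l" for l
  proof (induction l)
    case 0
    have "P 0 = 0\<^sub>m n n'" unfolding P_def by (rule eq_matI) auto
    thus ?case using vec_space.rank_0I by simp
  next
    case (Suc l)
    define R where "R = mat n n' (\<lambda>(i,j). U $$ (i,l) * V $$ (j,l))"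
    have R_carrier: "R \<in> carrier_mat n n'" unfolding R_def by simp
    have "P (Suc l) = P l + R"
      unfolding P_def R_def by (rule eq_matI) auto
    moreover have "vec_space.rank n R \<le> 1"
      by (rule vec_space.rank_le_1_product_entries[OF R_carrier,
            where f = "\<lambda>i. U $$ (i,l)" and g = "\<lambda>j. V $$ (j,l)"]) (auto simp: R_def)
    ultimately show ?case
      using vec_space.rank_subadditive[OF P_carrier R_carrier, of l] Suc.IH by simp
  qed
  moreover have "U * transpose_mat V = P m"
    using U V by (intro eq_matI) (auto simp: P_def scalar_prod_def atLeast0LessThan)
  ultimately show ?thesis by simp
qed

section \<open>Rank and nonnegative rank of \<open>A(v)\<close>\<close>

lemma A1_carrier: "A1 \<in> carrier_mat 3 3"
  unfolding A1_def mat_of_rows_list_def carrier_mat_def by (simp add: eval_nat_numeral)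

lemma A1_index: "i < 3 \<Longrightarrow> j < 3 \<Longrightarrow> A1 $$ (i,j) = [[1,1,2],[1,0,1],[2,1,(0::real)]] ! i ! j"
  unfolding A1_def mat_of_rows_list_def by (subst index_mat) auto

lemma avec_index: "i < 3 \<Longrightarrow> avec $ i = [2,2,(1::real)] ! i"
  unfolding avec_def by (simp only: vec_of_list_index)

lemma dim_avec: "dim_vec avec = 3"
  unfolding avec_def by simp

lemma det_A1_nonzero: "det A1 \<noteq> 0"
proof
  assume "det A1 = 0"
  then obtain x where x: "x \<in> carrier_vec 3" "x \<noteq> 0\<^sub>v 3" "A1 *\<^sub>v x = 0\<^sub>v 3"
    using det_0_iff_vec_prod_zero_field[OF A1_carrier] by blast
  have row: "A1 $$ (i,0) * x $ 0 + A1 $$ (i,1) * x $ 1 + A1 $$ (i,2) * x $ 2 = 0" if "i < 3" for i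
  proof -
    have "(A1 *\<^sub>v x) $ i = (\<Sum>j<3. A1 $$ (i,j) * x $ j)"
      using x(1) that A1_carrier by (simp add: scalar_prod_def atLeast0LessThan)
    thus ?thesis using x(3) that by (simp add: sum_lessThan_3)
  qed
  have "x $ 0 + x $ 1 + 2 * x $ 2 = 0" "x $ 0 + x $ 2 = 0" "2 * x $ 0 + x $ 1 = 0"
    using row[of 0] row[of 1] row[of 2] by (simp_all add: A1_index)
  hence "x $ 0 = 0" "x $ 1 = 0" "x $ 2 = 0" by linarith+
  hence "x = 0\<^sub>v 3" using x(1) by (intro eq_vecI) (auto simp: less_3_cases)
  with x(2) show False ..
qed

lemma dim_Av: "dim_row (Av v) = 3 + dim_vec v" "dim_col (Av v) = 3 + dim_vec v"
  unfolding Av_def outer_def using A1_carrier dim_avec by auto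

lemma Av_carrier: "Av v \<in> carrier_mat (3 + dim_vec v) (3 + dim_vec v)"
  using dim_Av by (intro carrier_matI)

lemma Av_index:
  assumes "i < 3 + dim_vec v" "j < 3 + dim_vec v"
  shows "Av v $$ (i,j) =
    (if i < 3 then (if j < 3 then A1 $$ (i,j) else avec $ i * v $ (j - 3))
     else (if j < 3 then v $ (i - 3) * avec $ j else v $ (i - 3) * v $ (j - 3)))"
  unfolding Av_def outer_def using assms A1_carrier dim_avec by (simp add: index_mat_four_block)

lemma Av_leading_block: "mat 3 3 (\<lambda>(i,j). Av v $$ (i,j)) = A1"
  using A1_carrier by (intro eq_matI) (auto simp: Av_index)

text \<open>The rows \<open>v\<^sub>t (0,1,2)\<close> of \<open>U0\<close> and \<open>v\<^sub>t (1,1,0)\<close> of \<open>V0\<close> reproduce \<open>a v\<^sup>T\<close>, \<open>v a\<^sup>T\<close>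
  and \<open>v v\<^sup>T\<close> because the leading rows \<open>u\<^sub>i\<close> of \<open>U0\<close> and \<open>w\<^sub>j\<close> of \<open>V0\<close> satisfy
  \<open>u\<^sub>i \<bullet> (1,1,0) = a\<^sub>i\<close>, \<open>(0,1,2) \<bullet> w\<^sub>j = a\<^sub>j\<close> and \<open>(0,1,2) \<bullet> (1,1,0) = 1\<close>.\<close>

definition U0 :: "real vec \<Rightarrow> real mat" where
  "U0 v = mat (3 + dim_vec v) 3 (\<lambda>(i,l).
     if i < 3 then [[0,2,1],[1,1,0],[1,0,1]] ! i ! l else v $ (i - 3) * [0,1,2] ! l)"

definition V0 :: "real vec \<Rightarrow> real mat" where
  "V0 v = mat (3 + dim_vec v) 3 (\<lambda>(i,l).
     if i < 3 then [[1,0,1],[0,0,1],[0,1,0]] ! i ! l else v $ (i - 3) * [1,1,0] ! l)"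

lemma U0_carrier: "U0 v \<in> carrier_mat (3 + dim_vec v) 3"
  unfolding U0_def by simp

lemma V0_carrier: "V0 v \<in> carrier_mat (3 + dim_vec v) 3"
  unfolding V0_def by simp

lemma Av_eq_U0_V0: "Av v = U0 v * transpose_mat (V0 v)"
proof (rule eq_matI)
  fix i j assume "i < dim_row (U0 v * transpose_mat (V0 v))" "j < dim_col (U0 v * transpose_mat (V0 v))"
  hence i: "i < 3 + dim_vec v" and j: "j < 3 + dim_vec v" by (simp_all add: U0_def V0_def)
  show "Av v $$ (i,j) = (U0 v * transpose_mat (V0 v)) $$ (i,j)"
    unfolding index_mult_transpose_mat[OF U0_carrier V0_carrier i j] sum_lessThan_3 Av_index[OF i j]
    using i j by (cases "i < 3"; cases "j < 3") (auto simp: U0_def V0_def less_3_cases A1_index avec_index)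
qed (simp_all add: dim_Av U0_def V0_def)

lemma U0_nonneg: "\<forall>i<dim_vec v. v $ i \<ge> 0 \<Longrightarrow> nonneg_mat (U0 v)"
  unfolding nonneg_mat_def U0_def by (auto simp: less_3_cases)

lemma V0_nonneg: "\<forall>i<dim_vec v. v $ i \<ge> 0 \<Longrightarrow> nonneg_mat (V0 v)"
  unfolding nonneg_mat_def V0_def by (auto simp: less_3_cases)

lemma mat_rank_Av: "mat_rank (Av v) = 3"
proof -
  have "vec_space.rank (3 + dim_vec v) (Av v) \<le> 3"
    using rank_mult_transpose_le[OF U0_carrier V0_carrier] Av_eq_U0_V0 by simp
  moreover have "3 \<le> vec_space.rank (3 + dim_vec v) (Av v)"
  proof -
    have "submatrix (Av v) {..<3} {..<3} = A1"
      using submatrix_lessThan[of 3 "Av v" 3] dim_Av Av_leading_block[of v] by simp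
    hence "card {j. j < 3 + dim_vec v \<and> j \<in> {..<3::nat}} \<le> vec_space.rank (3 + dim_vec v) (Av v)"
      using vec_space.rank_gt_minor[OF Av_carrier, where I = "{..<3}" and J = "{..<3}"] det_A1_nonzero by simp
    moreover have "{j. j < 3 + dim_vec v \<and> j \<in> {..<3::nat}} = {..<3}" by auto
    ultimately show ?thesis by simp
  qed
  ultimately show ?thesis
    unfolding mat_rank_def dim_Av by simp
qed

lemma Av_factorization_width_ge_3:
  assumes U: "U \<in> carrier_mat (3 + dim_vec v) m" and V: "V \<in> carrier_mat (3 + dim_vec v) m"
    and A: "Av v = U * transpose_mat V"
  shows "3 \<le> m"
proof (rule factorization_width_ge_leading_block[OF U V])
  have "mat 3 3 (\<lambda>(i,j). (U * transpose_mat V) $$ (i,j)) = A1"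
    using Av_leading_block[of v] A by simp
  thus "det (mat 3 3 (\<lambda>(i,j). (U * transpose_mat V) $$ (i,j))) \<noteq> 0"
    using det_A1_nonzero by simp
qed simp

lemma nonneg_rank_Av:
  assumes "\<forall>i<dim_vec v. v $ i \<ge> 0"
  shows "nonneg_rank (Av v) = 3"
  unfolding nonneg_rank_def dim_Av
proof (rule Least_equality)
  show "\<exists>U V. U \<in> carrier_mat (3 + dim_vec v) 3 \<and> V \<in> carrier_mat (3 + dim_vec v) 3
      \<and> nonneg_mat U \<and> nonneg_mat V \<and> Av v = U * transpose_mat V"
    using U0_carrier V0_carrier U0_nonneg[OF assms] V0_nonneg[OF assms] Av_eq_U0_V0 by blast
next
  fix m assume "\<exists>U V. U \<in> carrier_mat (3 + dim_vec v) m \<and> V \<in> carrier_mat (3 + dim_vec v) m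
      \<and> nonneg_mat U \<and> nonneg_mat V \<and> Av v = U * transpose_mat V"
  thus "3 \<le> m" using Av_factorization_width_ge_3 by blast
qed

section \<open>A symmetric nonnegative Gram system in dimension three\<close>

definition bilin3 :: "real mat \<Rightarrow> (nat \<Rightarrow> real) \<Rightarrow> (nat \<Rightarrow> real) \<Rightarrow> real" where
  "bilin3 C x y = (\<Sum>p<3. \<Sum>q<3. x p * C $$ (p,q) * y q)"

lemma bilin3_add_right: "bilin3 C x (\<lambda>q. y q + z q) = bilin3 C x y + bilin3 C x z"
  unfolding bilin3_def by (simp add: distrib_left sum.distrib)

lemma bilin3_diff_right: "bilin3 C x (\<lambda>q. y q - z q) = bilin3 C x y - bilin3 C x z"
  unfolding bilin3_def by (simp add: right_diff_distrib sum_subtractf)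

lemma bilin3_scale_right: "bilin3 C x (\<lambda>q. c * y q) = c * bilin3 C x y"
  unfolding bilin3_def by (simp add: sum_distrib_left mult.left_commute)

lemma bilin3_rows_eq_index:
  assumes "B \<in> carrier_mat n 3" "C \<in> carrier_mat 3 3" "i < n" "j < n"
  shows "bilin3 C (\<lambda>p. B $$ (i,p)) (\<lambda>q. B $$ (j,q)) = (B * C * transpose_mat B) $$ (i,j)"
  unfolding bilin3_def index_mult_mult_transpose_mat[OF assms] ..

lemma sum_lessThan_3_distinct:
  assumes "i < 3" "j < 3" "l < 3" "i \<noteq> j" "i \<noteq> l" "j \<noteq> l"
  shows "(\<Sum>q<(3::nat). f q) = f i + f j + (f l :: 'a::comm_monoid_add)"
proof -
  have "{..<3} = {i, j, l}" using assms by (auto simp: less_3_cases)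
  thus ?thesis using assms by (simp add: add.assoc)
qed

lemma bilin3_self_zero_support:
  assumes C: "C \<in> carrier_mat 3 3" "nonneg_mat C" and x: "\<forall>p<3. x p \<ge> 0"
    and "bilin3 C x x = 0" and p: "p < 3" "x p > 0" and q: "q < 3" "x q > 0"
  shows "C $$ (p,q) = 0"
proof -
  have term_nonneg: "x p' * C $$ (p',q') * x q' \<ge> 0" if "p' < 3" "q' < 3" for p' q'
    using C x that unfolding nonneg_mat_def by simp
  have row_nonneg: "(\<Sum>q'<3. x p' * C $$ (p',q') * x q') \<ge> 0" if "p' < 3" for p'
    using term_nonneg that by (intro sum_nonneg) auto
  have "(\<Sum>q'<3. x p * C $$ (p,q') * x q') = 0"
    using \<open>bilin3 C x x = 0\<close> row_nonneg p unfolding bilin3_def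
    by (subst (asm) sum_nonneg_eq_0_iff) auto
  hence "x p * C $$ (p,q) * x q = 0"
    using term_nonneg p q by (subst (asm) sum_nonneg_eq_0_iff) auto
  thus ?thesis using p q by simp
qed

lemma bilin3_pos_witness:
  assumes C: "C \<in> carrier_mat 3 3" "nonneg_mat C"
    and x: "\<forall>p<3. x p \<ge> 0" and y: "\<forall>q<3. y q \<ge> 0" and "bilin3 C x y > 0"
  shows "\<exists>p<3. \<exists>q<3. x p > 0 \<and> C $$ (p,q) > 0 \<and> y q > 0"
proof (rule ccontr)
  assume none: "\<not> ?thesis"
  have "x p * C $$ (p,q) * y q = 0" if "p < 3" "q < 3" for p q
  proof -
    have "x p \<ge> 0" "C $$ (p,q) \<ge> 0" "y q \<ge> 0"
      using that C x y unfolding nonneg_mat_def by auto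
    moreover have "\<not> (x p > 0 \<and> C $$ (p,q) > 0 \<and> y q > 0)"
      using none that by blast
    ultimately show ?thesis by (metis less_eq_real_def mult_eq_0_iff)
  qed
  hence "bilin3 C x y = 0" unfolding bilin3_def by (intro sum.neutral ballI) auto
  with \<open>bilin3 C x y > 0\<close> show False by simp
qed

text \<open>The rows \<open>i\<close> and \<open>p\<close> are then both multiples of \<open>e\<^sub>j\<^sup>T\<close>.\<close>

lemma symmetric_zero_block_det_zero:
  assumes C: "C \<in> carrier_mat 3 3" and sym: "transpose_mat C = C"
    and ijp: "i < 3" "j < 3" "p < 3" "i \<noteq> j" "i \<noteq> p" "j \<noteq> p"
    and zero: "C $$ (i,i) = 0" "C $$ (i,p) = 0" "C $$ (p,p) = (0::real)"
  shows "det C = 0"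
proof (rule ccontr)
  assume det: "det C \<noteq> 0"
  have Csym: "C $$ (q,m) = C $$ (m,q)" if "m < 3" "q < 3" for m q
    using arg_cong[OF sym, of "\<lambda>M. M $$ (m,q)"] C that by simp
  have other: "m = i \<or> m = p" if "m < 3" "m \<noteq> j" for m
    using that ijp by (auto simp: less_3_cases)
  note expand = sum_lessThan_3_distinct[OF ijp]
  define x where "x q = (if q = i then C $$ (p,j) else if q = p then - C $$ (i,j) else 0)" for q
  have "(\<Sum>q<3. C $$ (m,q) * x q) = 0" if "m < 3" for m
    using other[OF that] ijp zero Csym unfolding expand x_def by (cases "m = j") auto
  hence "x i = 0" "x p = 0"
    using det_nonzero_kernel_trivial[OF C det] ijp by blast+
  hence "C $$ (p,j) = 0" "C $$ (i,j) = 0" using ijp unfolding x_def by auto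
  define e where "e q = (if q = i then 1 else 0 :: real)" for q
  have "(\<Sum>q<3. C $$ (m,q) * e q) = 0" if "m < 3" for m
    using other[OF that] ijp zero Csym \<open>C $$ (i,j) = 0\<close> unfolding expand e_def
    by (cases "m = j") auto
  hence "e i = 0" using det_nonzero_kernel_trivial[OF C det] ijp by blast
  thus False unfolding e_def by simp
qed

lemma gram_equations_infeasible:
  fixes \<beta> \<gamma> p q r c d e f :: real
  assumes pos: "\<beta> > 0" "\<gamma> > 0" and nn: "p \<ge> 0" "q \<ge> 0" "r \<ge> 0" "c \<ge> 0" "d \<ge> 0" "e \<ge> 0" "f \<ge> 0"
    and H1: "\<beta> * c * \<gamma> = 1" and H2: "(q * c + r * d) * \<beta> = 1" and H3: "(p * c + r * e) * \<gamma> = 2"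
    and H4: "2*p*q*c + 2*p*r*d + 2*q*r*e + r*r*f = 1" and H5: "p \<ge> \<beta>"
  shows False
proof -
  have S3: "p*q*c*\<beta>*\<gamma> = p*q" using H1 by (metis mult.commute mult.left_commute mult_1)
  have S1: "p*r*d*\<beta>*\<gamma> = p*\<gamma> - p*q"
  proof -
    have "p*\<gamma>*((q * c + r * d) * \<beta>) = p*\<gamma>" using H2 by simp
    moreover have "p*\<gamma>*((q * c + r * d) * \<beta>) = p*q*c*\<beta>*\<gamma> + p*r*d*\<beta>*\<gamma>" by (simp add: algebra_simps)
    ultimately show ?thesis using S3 by linarith
  qed
  have S2: "q*r*e*\<beta>*\<gamma> = 2*q*\<beta> - p*q"
  proof -
    have "q*\<beta>*((p * c + r * e) * \<gamma>) = 2*q*\<beta>" using H3 by simp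
    moreover have "q*\<beta>*((p * c + r * e) * \<gamma>) = p*q*c*\<beta>*\<gamma> + q*r*e*\<beta>*\<gamma>" by (simp add: algebra_simps)
    ultimately show ?thesis using S3 by linarith
  qed
  have "\<beta>*\<gamma> = \<beta>*\<gamma>*(2*p*q*c + 2*p*r*d + 2*q*r*e + r*r*f)" using H4 by simp
  also have "\<dots> = 2*(p*q*c*\<beta>*\<gamma>) + 2*(p*r*d*\<beta>*\<gamma>) + 2*(q*r*e*\<beta>*\<gamma>) + r*r*f*\<beta>*\<gamma>"
    by (simp add: algebra_simps)
  also have "\<dots> = 2*p*\<gamma> + 2*q*(2*\<beta> - p) + r*r*f*\<beta>*\<gamma>"
    unfolding S1 S2 S3 by (simp add: algebra_simps)
  finally have E: "\<beta>*\<gamma> = 2*p*\<gamma> + 2*q*(2*\<beta> - p) + r*r*f*\<beta>*\<gamma>" .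
  have "p \<le> 2*\<beta>"
  proof -
    have "p*c*\<gamma> \<le> 2" using H3 nn pos by (smt (verit) mult_nonneg_nonneg distrib_right)
    hence "\<beta>*(p*c*\<gamma>) \<le> 2*\<beta>" using pos by (simp add: mult_left_mono mult.commute)
    moreover have "\<beta>*(p*c*\<gamma>) = p" using H1 by (metis mult.commute mult.left_commute mult_1)
    ultimately show ?thesis by simp
  qed
  hence "2*q*(2*\<beta> - p) \<ge> 0" using nn by simp
  moreover have "r*r*f*\<beta>*\<gamma> \<ge> 0" using nn pos by simp
  moreover have "2*p*\<gamma> \<ge> 2*\<beta>*\<gamma>" using H5 pos by simp
  moreover have "\<beta>*\<gamma> > 0" using pos by simp
  ultimately show False using E by linarith
qed

lemma isotropic_pair_supports:
  assumes C: "C \<in> carrier_mat 3 3" "nonneg_mat C" and sym: "transpose_mat C = C" and det: "det C \<noteq> 0"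
    and nn: "\<forall>p<3. x p \<ge> 0" "\<forall>p<3. y p \<ge> 0"
    and Gxx: "bilin3 C x x = 0" and Gxy: "bilin3 C x y > 0" and Gyy: "bilin3 C y y = 0"
  obtains i j l where "i < 3" "j < 3" "l < 3" "i \<noteq> j" "i \<noteq> l" "j \<noteq> l"
    and "x i > 0" "x j = 0" "x l = 0" "y i = 0" "y j > 0" "y l = 0"
    and "C $$ (i,i) = 0" "C $$ (j,j) = 0"
proof -
  have zero_x: "C $$ (p,q) = 0" if "p < 3" "x p > 0" "q < 3" "x q > 0" for p q
    using bilin3_self_zero_support[OF C nn(1) Gxx] that by blast
  have zero_y: "C $$ (p,q) = 0" if "p < 3" "y p > 0" "q < 3" "y q > 0" for p q
    using bilin3_self_zero_support[OF C nn(2) Gyy] that by blast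
  obtain i j where ij: "i < 3" "j < 3" "x i > 0" "C $$ (i,j) > 0" "y j > 0"
    using bilin3_pos_witness[OF C nn] Gxy by auto
  have Cii: "C $$ (i,i) = 0" and Cjj: "C $$ (j,j) = 0"
    using zero_x[of i i] zero_y[of j j] ij by auto
  hence "i \<noteq> j" using ij by auto
  define l where "l = 3 - i - j"
  have l: "l < 3" "i \<noteq> l" "j \<noteq> l"
    using ij \<open>i \<noteq> j\<close> unfolding l_def by (auto simp: less_3_cases)
  have vanish: "z q = 0" if "z q \<ge> 0" "\<not> z q > 0" for z :: "nat \<Rightarrow> real" and q
    using that by simp
  have "x j = 0" using vanish[of x j] zero_x[of i j] nn(1) ij by auto
  moreover have "y i = 0" using vanish[of y i] zero_y[of i j] nn(2) ij by auto
  moreover have "x l = 0"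
  proof (rule vanish)
    show "x l \<ge> 0" using nn(1) l by simp
    show "\<not> x l > 0"
    proof
      assume "x l > 0"
      hence "C $$ (i,l) = 0" "C $$ (l,l) = 0" using zero_x ij l by auto
      thus False using symmetric_zero_block_det_zero[OF C(1) sym ij(1,2) l(1) \<open>i \<noteq> j\<close> l(2,3)] Cii det
        by simp
    qed
  qed
  moreover have "y l = 0"
  proof (rule vanish)
    show "y l \<ge> 0" using nn(2) l by simp
    show "\<not> y l > 0"
    proof
      assume "y l > 0"
      hence "C $$ (j,l) = 0" "C $$ (l,l) = 0" using zero_y ij l by auto
      thus False using symmetric_zero_block_det_zero[OF C(1) sym ij(2,1) l(1) \<open>i \<noteq> j\<close>[symmetric] l(3,2)] Cjj det
        by simp
    qed
  qed
  ultimately show thesis using that ij l \<open>i \<noteq> j\<close> Cii Cjj by blast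
qed

lemma symmetric_nonneg_gram_3_infeasible:
  assumes C: "C \<in> carrier_mat 3 3" "nonneg_mat C" and sym: "transpose_mat C = C" and det: "det C \<noteq> 0"
    and nn: "\<forall>p<3. b0 p \<ge> 0" "\<forall>p<3. b1 p \<ge> 0" "\<forall>p<3. b2 p \<ge> 0"
    and dominated: "\<forall>p<3. b1 p \<le> b0 p + b2 p"
    and G00: "bilin3 C b0 b0 = 1" and G01: "bilin3 C b0 b1 = 1" and G02: "bilin3 C b0 b2 = 2"
    and G11: "bilin3 C b1 b1 = 0" and G12: "bilin3 C b1 b2 = 1" and G22: "bilin3 C b2 b2 = 0"
  shows False
proof -
  obtain i j l where ijl: "i < 3" "j < 3" "l < 3" "i \<noteq> j" "i \<noteq> l" "j \<noteq> l"
    and b1: "b1 i > 0" "b1 j = 0" "b1 l = 0" and b2: "b2 i = 0" "b2 j > 0" "b2 l = 0"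
    and Cii: "C $$ (i,i) = 0" and Cjj: "C $$ (j,j) = 0"
    using isotropic_pair_supports[OF C sym det nn(2,3) G11 _ G22] G12 by auto
  note expand = sum_lessThan_3_distinct[OF ijl]
  have Cnn: "C $$ (p,q) \<ge> 0" if "p < 3" "q < 3" for p q
    using C that unfolding nonneg_mat_def by auto
  have sym_ijl: "C $$ (j,i) = C $$ (i,j)" "C $$ (l,i) = C $$ (i,l)" "C $$ (l,j) = C $$ (j,l)"
    using arg_cong[OF sym, of "\<lambda>M. M $$ (i,j)"] arg_cong[OF sym, of "\<lambda>M. M $$ (i,l)"]
      arg_cong[OF sym, of "\<lambda>M. M $$ (j,l)"] C ijl by auto
  show False
  proof (rule gram_equations_infeasible[of "b1 i" "b2 j" "b0 i" "b0 j" "b0 l" "C $$ (i,j)" "C $$ (i,l)" "C $$ (j,l)" "C $$ (l,l)"])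
    show "b1 i > 0" "b2 j > 0" using b1 b2 by auto
    show "b0 i \<ge> 0" "b0 j \<ge> 0" "b0 l \<ge> 0" using nn(1) ijl by auto
    show "C $$ (i,j) \<ge> 0" "C $$ (i,l) \<ge> 0" "C $$ (j,l) \<ge> 0" "C $$ (l,l) \<ge> 0" using Cnn ijl by auto
    show "b1 i * C $$ (i,j) * b2 j = 1"
      using G12 unfolding bilin3_def expand by (simp add: b1 b2)
    show "(b0 j * C $$ (i,j) + b0 l * C $$ (i,l)) * b1 i = 1"
      using G01 unfolding bilin3_def expand by (simp add: b1 Cii sym_ijl algebra_simps)
    show "(b0 i * C $$ (i,j) + b0 l * C $$ (j,l)) * b2 j = 2"
      using G02 unfolding bilin3_def expand by (simp add: b2 Cjj sym_ijl algebra_simps)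
    show "2 * b0 i * b0 j * C $$ (i,j) + 2 * b0 i * b0 l * C $$ (i,l) + 2 * b0 j * b0 l * C $$ (j,l)
        + b0 l * b0 l * C $$ (l,l) = 1"
      using G00 unfolding bilin3_def expand by (simp add: Cii Cjj sym_ijl algebra_simps)
    show "b0 i \<ge> b1 i" using dominated ijl(1) b2(1) by auto
  qed
qed

section \<open>The SNT-rank of \<open>A(v)\<close>\<close>

definition B0 :: "real vec \<Rightarrow> real mat" where
  "B0 v = mat (3 + dim_vec v) 4 (\<lambda>(i,l).
     if i < 3 then (if l = i then 1 else 0) else (if l = 3 then v $ (i - 3) else 0))"

definition C0 :: "real mat" where
  "C0 = mat 4 4 (\<lambda>(p,q). [[1,1,2,2],[1,0,1,2],[2,1,0,1],[2,2,1,(1::real)]] ! p ! q)"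

lemma B0_carrier: "B0 v \<in> carrier_mat (3 + dim_vec v) 4"
  unfolding B0_def by simp

lemma C0_carrier: "C0 \<in> carrier_mat 4 4"
  unfolding C0_def by simp

lemma Av_eq_B0_C0: "Av v = B0 v * C0 * transpose_mat (B0 v)"
proof (rule eq_matI)
  fix i j assume "i < dim_row (B0 v * C0 * transpose_mat (B0 v))" "j < dim_col (B0 v * C0 * transpose_mat (B0 v))"
  hence i: "i < 3 + dim_vec v" and j: "j < 3 + dim_vec v" by (simp_all add: B0_def)
  show "Av v $$ (i,j) = (B0 v * C0 * transpose_mat (B0 v)) $$ (i,j)"
    unfolding index_mult_mult_transpose_mat[OF B0_carrier C0_carrier i j] sum_lessThan_4 Av_index[OF i j]
    using i j by (cases "i < 3"; cases "j < 3") (auto simp: B0_def C0_def less_3_cases A1_index avec_index)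
qed (simp_all add: dim_Av B0_def)

lemma C0_symmetric: "transpose_mat C0 = C0"
  by (rule eq_matI) (auto simp: C0_def less_4_cases)

lemma C0_nonneg: "nonneg_mat C0"
  unfolding nonneg_mat_def C0_def by (auto simp: less_4_cases)

lemma B0_nonneg: "\<forall>i<dim_vec v. v $ i \<ge> 0 \<Longrightarrow> nonneg_mat (B0 v)"
  unfolding nonneg_mat_def B0_def by auto

lemma exists_pos_index:
  assumes "\<forall>i<dim_vec v. v $ i \<ge> (0::real)" and "v \<bullet> v \<noteq> 0"
  shows "\<exists>t<dim_vec v. v $ t > 0"
proof (rule ccontr)
  assume none: "\<not> ?thesis"
  have "v $ t = 0" if "t < dim_vec v" for t
  proof -
    have "\<not> v $ t > 0" using none that by blast
    moreover have "v $ t \<ge> 0" using assms(1) that by simp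
    ultimately show ?thesis by simp
  qed
  hence "v \<bullet> v = 0" by (simp add: scalar_prod_def)
  with assms(2) show False ..
qed

lemma Av_snt_3_leading_nonsingular:
  assumes B: "B \<in> carrier_mat (3 + dim_vec v) 3" and C: "C \<in> carrier_mat 3 3"
    and A: "Av v = B * C * transpose_mat B"
  shows "det C \<noteq> 0" "det (mat 3 3 (\<lambda>(i,p). B $$ (i,p)) * C) \<noteq> 0"
proof -
  define B1 where "B1 = mat 3 3 (\<lambda>(i,p). B $$ (i,p))"
  have B1: "B1 \<in> carrier_mat 3 3" "transpose_mat B1 \<in> carrier_mat 3 3"
    unfolding B1_def by simp_all
  have "A1 = B1 * C * transpose_mat B1"
  proof (rule eq_matI)
    fix i j assume "i < dim_row (B1 * C * transpose_mat B1)" "j < dim_col (B1 * C * transpose_mat B1)"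
    hence i: "i < 3" and j: "j < 3" using B1 by auto
    have "A1 $$ (i,j) = (B * C * transpose_mat B) $$ (i,j)"
      using A Av_index[of i v j] i j by simp
    also have "\<dots> = (B1 * C * transpose_mat B1) $$ (i,j)"
      using index_mult_mult_transpose_mat[OF B C, of i j] index_mult_mult_transpose_mat[OF B1(1) C i j] i j
      by (simp add: B1_def)
    finally show "A1 $$ (i,j) = (B1 * C * transpose_mat B1) $$ (i,j)" .
  qed (use A1_carrier B1 C in auto)
  hence "det A1 = det B1 * det C * det B1"
    using det_mult[OF mult_carrier_mat[OF B1(1) C] B1(2)] det_mult[OF B1(1) C] det_transpose[OF B1(1)]
    by simp
  thus "det C \<noteq> 0" "det (B1 * C) \<noteq> 0"
    using det_A1_nonzero det_mult[OF B1(1) C] by auto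
qed

text \<open>This is where \<open>a = A\<^sub>1 (1,-1,1)\<^sup>T\<close> enters.\<close>

lemma Av_snt_3_lower_rows:
  assumes B: "B \<in> carrier_mat (3 + dim_vec v) 3" and C: "C \<in> carrier_mat 3 3"
    and A: "Av v = B * C * transpose_mat B"
    and det: "det (mat 3 3 (\<lambda>(i,p). B $$ (i,p)) * C) \<noteq> 0" and t: "t < dim_vec v" and "q < 3"
  shows "B $$ (3 + t, q) = v $ t * (B $$ (0,q) - B $$ (1,q) + B $$ (2,q))"
proof -
  define b where "b i p = B $$ (i,p)" for i p
  define B1C where "B1C = mat 3 3 (\<lambda>(i,p). B $$ (i,p)) * C"
  have B1C: "B1C \<in> carrier_mat 3 3" unfolding B1C_def using C by (intro mult_carrier_mat) simp_all
  have Av_bilin3: "Av v $$ (i,j) = bilin3 C (b i) (b j)" if "i < 3 + dim_vec v" "j < 3 + dim_vec v" for i j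
    using A bilin3_rows_eq_index[OF B C that] unfolding b_def by simp
  define d where "d q = v $ t * (b 0 q - b 1 q + b 2 q) - b (3 + t) q" for q
  have "d q = 0"
  proof (rule det_nonzero_kernel_trivial[OF B1C det[folded B1C_def] _ \<open>q < 3\<close>])
    fix m :: nat assume m: "m < 3"
    have "B1C $$ (m,q) = (\<Sum>p<3. b m p * C $$ (p,q))" if "q < 3" for q
      using C m that unfolding B1C_def b_def by (simp add: scalar_prod_def atLeast0LessThan)
    hence "(\<Sum>q<3. B1C $$ (m,q) * d q) = (\<Sum>q<3. \<Sum>p<3. b m p * C $$ (p,q) * d q)"
      by (intro sum.cong) (simp_all add: sum_distrib_right)
    also have "\<dots> = bilin3 C (b m) d"
      unfolding bilin3_def by (rule sum.swap)
    also have "\<dots> = v $ t * (bilin3 C (b m) (b 0) - bilin3 C (b m) (b 1) + bilin3 C (b m) (b 2))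
        - bilin3 C (b m) (b (3 + t))"
      unfolding d_def bilin3_diff_right bilin3_scale_right bilin3_add_right ..
    also have "\<dots> = 0"
      using m t Av_bilin3 Av_index[of m v] by (auto simp: less_3_cases A1_index avec_index)
    finally show "(\<Sum>q<3. B1C $$ (m,q) * d q) = 0" .
  qed
  thus ?thesis unfolding d_def b_def by simp
qed

lemma Av_no_snt_factorization_3:
  assumes B: "B \<in> carrier_mat (3 + dim_vec v) 3" and C: "C \<in> carrier_mat 3 3"
    and sym: "transpose_mat C = C" and Bnn: "nonneg_mat B" and Cnn: "nonneg_mat C"
    and A: "Av v = B * C * transpose_mat B"
    and v: "\<forall>i<dim_vec v. v $ i \<ge> 0" "v \<bullet> v = 1"
  shows False
proof -
  define b where "b i p = B $$ (i,p)" for i p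
  have b_nonneg: "b i p \<ge> 0" if "i < 3 + dim_vec v" "p < 3" for i p
    using Bnn B that unfolding nonneg_mat_def b_def by auto
  have gram: "bilin3 C (b i) (b j) = A1 $$ (i,j)" if "i < 3" "j < 3" for i j
    using A bilin3_rows_eq_index[OF B C, of i j] Av_index[of i v j] that unfolding b_def by simp
  obtain t where t: "t < dim_vec v" "v $ t > 0"
    using exists_pos_index[OF v(1)] v(2) by auto
  note nonsingular = Av_snt_3_leading_nonsingular[OF B C A]
  have "b 1 q \<le> b 0 q + b 2 q" if "q < 3" for q
  proof -
    have "0 \<le> b (3 + t) q" using b_nonneg t that by simp
    also have "\<dots> = v $ t * (b 0 q - b 1 q + b 2 q)"
      using Av_snt_3_lower_rows[OF B C A nonsingular(2) t(1) that] unfolding b_def .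
    finally show ?thesis using t(2) by (simp add: zero_le_mult_iff)
  qed
  moreover have "\<forall>p<3. b i p \<ge> 0" if "i < 3" for i using b_nonneg that by simp
  ultimately show False
    using symmetric_nonneg_gram_3_infeasible[OF C Cnn sym nonsingular(1), of "b 0" "b 1" "b 2"]
    by (simp add: gram A1_index)
qed

lemma snt_rank_Av:
  assumes "\<forall>i<dim_vec v. v $ i \<ge> 0" "v \<bullet> v = 1"
  shows "snt_rank (Av v) = 4"
  unfolding snt_rank_def dim_Av
proof (rule Least_equality)
  show "\<exists>B C. B \<in> carrier_mat (3 + dim_vec v) 4 \<and> C \<in> carrier_mat 4 4 \<and> transpose_mat C = C
      \<and> nonneg_mat B \<and> nonneg_mat C \<and> Av v = B * C * transpose_mat B"
    using B0_carrier C0_carrier C0_symmetric B0_nonneg[OF assms(1)] C0_nonneg Av_eq_B0_C0 by blast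
next
  fix m assume "\<exists>B C. B \<in> carrier_mat (3 + dim_vec v) m \<and> C \<in> carrier_mat m m \<and> transpose_mat C = C
      \<and> nonneg_mat B \<and> nonneg_mat C \<and> Av v = B * C * transpose_mat B"
  then obtain B C where B: "B \<in> carrier_mat (3 + dim_vec v) m" and C: "C \<in> carrier_mat m m"
    and sym: "transpose_mat C = C" and nonneg: "nonneg_mat B" "nonneg_mat C"
    and A: "Av v = B * C * transpose_mat B"
    by blast
  have "transpose_mat B \<in> carrier_mat m (3 + dim_vec v)" using B by simp
  hence "B * transpose_mat (B * C) = B * C * transpose_mat B"
    using transpose_mult[OF B C] sym assoc_mult_mat[OF B C] by simp
  hence "3 \<le> m"
    using Av_factorization_width_ge_3[OF B mult_carrier_mat[OF B C]] A by simp
  moreover have "m \<noteq> 3"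
  proof
    assume "m = 3"
    thus False using Av_no_snt_factorization_3[OF _ _ sym nonneg A assms] B C by simp
  qed
  ultimately show "4 \<le> m" by simp
qed

text \<open>The hypothesis \<open>k \<ge> 1\<close> is implied by \<open>v \<bullet> v = 1\<close>.\<close>

theorem mainTheorem8:
  fixes v :: "real vec" and k :: nat
  assumes "k \<ge> 1" and "dim_vec v = k"
    and "\<forall>i<k. v $ i \<ge> 0"
    and "v \<bullet> v = 1"
  shows "mat_rank (Av v) = 3 \<and> nonneg_rank (Av v) = 3 \<and> snt_rank (Av v) = 4"
proof -
  have "\<forall>i<dim_vec v. v $ i \<ge> 0" using assms(2,3) by simp
  thus ?thesis using mat_rank_Av nonneg_rank_Av snt_rank_Av assms(4) by simp
qed

end
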